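(* Let $q$ be a prime, let $m \geq 1$ be an integer, and let $u$ be an integer with $0 \leq u \leq q-2$. Let $\mathcal{RM}_q(u,m) \subseteq \mathbb{F}_q^{q^m}$ be the code consisting of the vectors $\left(f(\alpha)\right)_{\alpha \in \mathbb{F}_q^m}$ (coordinates indexed by the points of $\mathbb{F}_q^m$), where $f$ ranges over all polynomials in $\mathbb{F}_q[x_1,\ldots,x_m]$ of total degree at most $u$, and let $\mathcal{RM}^{\perp}_q(u,m)$ be its dual code with respect to the standard bilinear form. Then for any $u+2$ distinct points of $\mathbb{F}_q^m$ lying on a common affine line, i.e. points $\mathbf{p}_1, \mathbf{p}_1 + t_1\mathbf{h}, \ldots, \mathbf{p}_1 + t_{u+1}\mathbf{h}$ with $\mathbf{p}_1 \in \mathbb{F}_q^m$, $\mathbf{h} \in \mathbb{F}_q^m\setminus\{\mathbf{0}\}$ and $t_1,\ldots,t_{u+1}$ distinct nonzero elements of $\mathbb{F}_q$, there exists a codeword of $\mathcal{RM}^{\perp}_q(u,m)$ of minimum nonzero Hamming weight whose support is exactly this set of $u+2$ points.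
   Context: The support of a vector is the set of coordinates where it is nonzero, identified with a set of points of $\mathbb{F}_q^m$. For $u \leq q-2$ the minimum nonzero Hamming weight of $\mathcal{RM}^{\perp}_q(u,m)$ equals $u+2$. *)

theory Defs
  imports Main "HOL-Computational_Algebra.Primes"
begin

text \<open>Points of F_q^m are functions 'm \<Rightarrow> 'a with 'a a finite field of prime order q
  and 'm a finite index type with CARD('m) = m. Words of length q^m are functions
  from points to 'a.\<close>

definition exponents :: "nat \<Rightarrow> ('m::finite \<Rightarrow> nat) set" where
  "exponents u = {e. (\<Sum>i\<in>UNIV. e i) \<le> u}"

definition RM :: "nat \<Rightarrow> (('m::finite \<Rightarrow> 'a::field) \<Rightarrow> 'a) set" where
  "RM u = {w. \<exists>c :: ('m \<Rightarrow> nat) \<Rightarrow> 'a.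
      \<forall>x. w x = (\<Sum>e\<in>exponents u. c e * (\<Prod>i\<in>UNIV. x i ^ e i))}"

definition dual_code :: "(('m::finite \<Rightarrow> 'a::{field,finite}) \<Rightarrow> 'a) set \<Rightarrow> (('m \<Rightarrow> 'a) \<Rightarrow> 'a) set" where
  "dual_code C = {v. \<forall>w\<in>C. (\<Sum>x\<in>UNIV. v x * w x) = 0}"

definition supp :: "('b \<Rightarrow> 'a::zero) \<Rightarrow> 'b set" where
  "supp v = {x. v x \<noteq> 0}"

definition hweight :: "('b \<Rightarrow> 'a::zero) \<Rightarrow> nat" where
  "hweight v = card (supp v)"

definition min_weight :: "('b \<Rightarrow> 'a::zero) set \<Rightarrow> nat" where
  "min_weight C = Min {hweight v | v. v \<in> C \<and> v \<noteq> (\<lambda>_. 0)}"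

end

theory Submission
  imports Defs "HOL-Computational_Algebra.Polynomial" "HOL-Library.FuncSet"
begin

text \<open>Weight at least \<open>u + 2\<close>: if a nonzero dual word \<open>v\<close> had support \<open>{x\<^sub>0} \<union> S\<close> with
  \<open>card S \<le> u\<close>, a product of \<open>card S\<close> affine factors, each vanishing at one point of \<open>S\<close> but
  not at \<open>x\<^sub>0\<close>, would be a word of \<open>RM u\<close> pairing nontrivially with \<open>v\<close>.
  Attained on any \<open>u + 2\<close> points \<open>p + s h\<close>, \<open>s \<in> T\<close>, of a line: a word of \<open>RM u\<close> restricted
  to the line is a univariate polynomial \<open>g\<close> of degree \<le> \<open>u\<close>, and
  \<open>\<Sum>s\<in>T. g s / (\<Prod>l\<in>T-{s}. s - l)\<close> is the coefficient of degree \<open>card T - 1\<close> of the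
  interpolation polynomial of \<open>g\<close> on \<open>T\<close>, i.e. of \<open>g\<close> itself, hence zero.
  So the word with value \<open>1 / (\<Prod>l\<in>T-{s}. s - l)\<close> at \<open>p + s h\<close> is dual.\<close>

definition monomial_eval :: "('m::finite \<Rightarrow> nat) \<Rightarrow> ('m \<Rightarrow> 'a::field) \<Rightarrow> 'a" where
  "monomial_eval e x = (\<Prod>i\<in>UNIV. x i ^ e i)"

lemma finite_exponents: "finite (exponents d :: ('m::finite \<Rightarrow> nat) set)"
proof -
  have "exponents d \<subseteq> PiE (UNIV :: 'm set) (\<lambda>_. {..d})"
  proof
    fix e :: "'m \<Rightarrow> nat" assume "e \<in> exponents d"
    hence "e i \<le> d" for i
      using member_le_sum[of i UNIV e] by (auto simp: exponents_def)
    thus "e \<in> PiE UNIV (\<lambda>_. {..d})" by (auto simp: PiE_def Pi_def extensional_def)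
  qed
  thus ?thesis by (rule finite_subset) (auto intro: finite_PiE)
qed

lemma exponents_mono: "d \<le> d' \<Longrightarrow> exponents d \<subseteq> exponents d'"
  by (auto simp: exponents_def)

lemma mem_RM_iff:
  "f \<in> RM d \<longleftrightarrow> (\<exists>c. \<forall>x. f x = (\<Sum>e\<in>exponents d. c e * monomial_eval e x))"
  by (simp add: RM_def monomial_eval_def)

lemma RM_mono:
  assumes "d \<le> d'" "f \<in> RM d"
  shows "f \<in> (RM d' :: (('m::finite \<Rightarrow> 'a::field) \<Rightarrow> 'a) set)"
proof -
  obtain c where c: "\<forall>x. f x = (\<Sum>e\<in>exponents d. c e * monomial_eval e x)"
    using assms mem_RM_iff by blast
  define c' where "c' e = (if e \<in> exponents d then c e else 0)" for e
  have "f x = (\<Sum>e\<in>exponents d'. c' e * monomial_eval e x)" for x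
    unfolding c[rule_format]
    by (rule sum.mono_neutral_cong_left)
      (use finite_exponents exponents_mono[OF assms(1)] in \<open>auto simp: c'_def\<close>)
  thus ?thesis by (auto simp: mem_RM_iff)
qed

lemma RM_const: "(\<lambda>x. a) \<in> (RM 0 :: (('m::finite \<Rightarrow> 'a::field) \<Rightarrow> 'a) set)"
proof -
  have "exponents 0 = {(\<lambda>_. 0) :: 'm \<Rightarrow> nat}" by (auto simp: exponents_def)
  thus ?thesis unfolding mem_RM_iff
    by (intro exI[of _ "\<lambda>_. a"]) (simp add: monomial_eval_def)
qed

lemma RM_add:
  assumes "f \<in> RM d" "g \<in> RM d"
  shows "(\<lambda>x. f x + g x) \<in> (RM d :: (('m::finite \<Rightarrow> 'a::field) \<Rightarrow> 'a) set)"
proof -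
  obtain c where c: "\<forall>x. f x = (\<Sum>e\<in>exponents d. c e * monomial_eval e x)"
    using assms mem_RM_iff by blast
  obtain c' where c': "\<forall>x. g x = (\<Sum>e\<in>exponents d. c' e * monomial_eval e x)"
    using assms mem_RM_iff by blast
  show ?thesis unfolding mem_RM_iff
    by (intro exI[of _ "\<lambda>e. c e + c' e"]) (simp add: c c' sum.distrib distrib_right)
qed

lemma RM_scale:
  assumes "f \<in> RM d"
  shows "(\<lambda>x. a * f x) \<in> (RM d :: (('m::finite \<Rightarrow> 'a::field) \<Rightarrow> 'a) set)"
proof -
  obtain c where c: "\<forall>x. f x = (\<Sum>e\<in>exponents d. c e * monomial_eval e x)"
    using assms mem_RM_iff by blast
  show ?thesis unfolding mem_RM_iff
    by (intro exI[of _ "\<lambda>e. a * c e"]) (simp add: c sum_distrib_left mult.assoc)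
qed

lemma sum_fun_upd_Suc:
  "sum (e(i := Suc (e i))) (UNIV :: 'm::finite set) = Suc (sum e UNIV)"
proof -
  have "sum (e(i := Suc (e i))) UNIV = Suc (e i) + sum e (UNIV - {i})"
    by (subst sum.remove[of _ i]) (auto intro!: sum.cong)
  also have "\<dots> = Suc (sum e UNIV)"
    by (subst (2) sum.remove[of _ i]) auto
  finally show ?thesis .
qed

lemma monomial_eval_fun_upd_Suc:
  "monomial_eval (e(i := Suc (e i))) x = monomial_eval e x * (x i :: 'a::field)"
proof -
  have "monomial_eval (e(i := Suc (e i))) x = (\<Prod>j\<in>UNIV. x j ^ e j * (if j = i then x i else 1))"
    unfolding monomial_eval_def by (intro prod.cong) auto
  also have "\<dots> = monomial_eval e x * x i" by (simp add: prod.distrib monomial_eval_def)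
  finally show ?thesis .
qed

lemma RM_mult_var:
  assumes "f \<in> RM d"
  shows "(\<lambda>x. f x * x i) \<in> (RM (Suc d) :: (('m::finite \<Rightarrow> 'a::field) \<Rightarrow> 'a) set)"
proof -
  obtain c where c: "\<forall>x. f x = (\<Sum>e\<in>exponents d. c e * monomial_eval e x)"
    using assms mem_RM_iff by blast
  define raise :: "('m \<Rightarrow> nat) \<Rightarrow> ('m \<Rightarrow> nat)" where "raise e = e(i := Suc (e i))" for e
  define lower :: "('m \<Rightarrow> nat) \<Rightarrow> ('m \<Rightarrow> nat)" where "lower e = e(i := e i - 1)" for e
  define c' where "c' e = (if 0 < e i \<and> lower e \<in> exponents d then c (lower e) else 0)" for e
  have lower_raise: "lower (raise e) = e" for e by (simp add: raise_def lower_def)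
  have inj_raise: "inj raise" by (metis lower_raise injI)
  have raise_pos: "0 < raise e i" for e by (simp add: raise_def)
  have monomial_eval_raise: "monomial_eval (raise e) x = monomial_eval e x * x i" for e x
    by (simp add: raise_def monomial_eval_fun_upd_Suc)
  have raise_exponents: "raise ` exponents d \<subseteq> exponents (Suc d)"
    by (auto simp: exponents_def raise_def sum_fun_upd_Suc simp del: fun_upd_apply)
  have "f x * x i = (\<Sum>e\<in>exponents (Suc d). c' e * monomial_eval e x)" for x
  proof -
    have "f x * x i = (\<Sum>e\<in>exponents d. c' (raise e) * monomial_eval (raise e) x)"
      unfolding c[rule_format] sum_distrib_right
      by (intro sum.cong refl)
        (simp add: c'_def lower_raise raise_pos monomial_eval_raise mult.assoc)
    also have "\<dots> = (\<Sum>e\<in>raise ` exponents d. c' e * monomial_eval e x)"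
      by (subst sum.reindex) (use inj_raise in \<open>auto intro: inj_on_subset\<close>)
    also have "\<dots> = (\<Sum>e\<in>exponents (Suc d). c' e * monomial_eval e x)"
    proof (rule sum.mono_neutral_left[OF finite_exponents raise_exponents], rule ballI)
      fix e assume e: "e \<in> exponents (Suc d) - raise ` exponents d"
      have "raise (lower e) = e" if "0 < e i" using that by (auto simp: raise_def lower_def)
      thus "c' e * monomial_eval e x = 0" using e by (auto simp: c'_def) (metis image_eqI)
    qed
    finally show ?thesis .
  qed
  thus ?thesis by (auto simp: mem_RM_iff)
qed

lemma RM_mult_affine:
  assumes "f \<in> RM d"
  shows "(\<lambda>x. f x * (x i - a)) \<in> (RM (Suc d) :: (('m::finite \<Rightarrow> 'a::field) \<Rightarrow> 'a) set)"
proof -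
  have "(\<lambda>x. (-a) * f x) \<in> (RM (Suc d) :: (('m \<Rightarrow> 'a) \<Rightarrow> 'a) set)"
    by (intro RM_scale RM_mono[OF _ assms]) simp
  hence "(\<lambda>x. f x * x i + (-a) * f x) \<in> (RM (Suc d) :: (('m \<Rightarrow> 'a) \<Rightarrow> 'a) set)"
    by (rule RM_add[OF RM_mult_var[OF assms]])
  thus ?thesis by (simp add: algebra_simps)
qed

lemma RM_prod_affine:
  assumes "finite S"
  shows "(\<lambda>x. \<Prod>y\<in>S. x (I y) - a y) \<in> (RM (card S) :: (('m::finite \<Rightarrow> 'a::field) \<Rightarrow> 'a) set)"
  using assms
proof (induction S rule: finite_induct)
  case empty
  then show ?case using RM_const[of 1] by simp
next
  case (insert y S)
  then show ?case
    using RM_mult_affine[OF insert.IH, of "I y" "a y"] by (simp add: mult.commute)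
qed

lemma dual_RM_weight_ge:
  fixes v :: "('m::finite \<Rightarrow> 'a::{field,finite}) \<Rightarrow> 'a"
  assumes "v \<in> dual_code (RM u)" "v \<noteq> (\<lambda>_. 0)"
  shows "u + 2 \<le> hweight v"
proof (rule ccontr)
  assume "\<not> ?thesis"
  hence card_supp: "card (supp v) \<le> u + 1" by (simp add: hweight_def)
  obtain x0 where x0: "v x0 \<noteq> 0" using assms(2) by auto
  define S where "S = supp v - {x0}"
  have "card S \<le> u" using card_supp x0 by (simp add: S_def supp_def)
  have "\<forall>y\<in>S. \<exists>i. y i \<noteq> x0 i" unfolding S_def by (auto simp: fun_eq_iff)
  then obtain I where I: "\<forall>y\<in>S. y (I y) \<noteq> x0 (I y)" by metis
  define w where "w x = (\<Prod>y\<in>S. x (I y) - y (I y))" for x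
  have "w \<in> RM u"
    unfolding w_def by (rule RM_mono[OF \<open>card S \<le> u\<close> RM_prod_affine]) simp
  have "w x0 \<noteq> 0" using I by (auto simp: w_def)
  have "v x * w x = 0" if "x \<in> UNIV - {x0}" for x
    using that by (cases "x \<in> S") (auto simp: w_def S_def supp_def intro: prod_zero)
  hence "(\<Sum>x\<in>UNIV. v x * w x) = v x0 * w x0"
    by (subst sum.remove[of _ x0]) (simp_all add: sum.neutral)
  also have "\<dots> \<noteq> 0" using x0 \<open>w x0 \<noteq> 0\<close> by simp
  finally show False using assms(1) \<open>w \<in> RM u\<close> by (auto simp: dual_code_def)
qed

lemma sum_poly_div_prod_diff_eq_0:
  fixes T :: "'a::field set" and g :: "'a poly"
  assumes "finite T" "degree g + 2 \<le> card T"
  shows "(\<Sum>s\<in>T. poly g s / (\<Prod>l\<in>T-{s}. s - l)) = 0"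
proof -
  define P where "P s = (\<Prod>l\<in>T-{s}. [:-l, 1:])" for s
  define R where "R = (\<Sum>s\<in>T. smult (poly g s / (\<Prod>l\<in>T-{s}. s - l)) (P s))"
  have degree_P: "degree (P s) = card T - 1" if "s \<in> T" for s
    unfolding P_def using that assms(1) by (subst degree_prod_eq_sum_degree) auto
  have coeff_P: "coeff (P s) (card T - 1) = 1" if "s \<in> T" for s
  proof -
    have "lead_coeff (P s) = 1" unfolding P_def by (simp add: lead_coeff_prod)
    thus ?thesis using degree_P[OF that] by simp
  qed
  have "degree R \<le> card T - 1"
    unfolding R_def
    by (intro degree_sum_le assms(1)) (use degree_P degree_smult_le order.trans in metis)
  moreover have "poly R k = poly g k" if "k \<in> T" for k
  proof -
    have "poly R k = (\<Sum>s\<in>T. poly g s / (\<Prod>l\<in>T-{s}. s - l) * (\<Prod>l\<in>T-{s}. k - l))"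
      by (simp add: R_def poly_sum P_def poly_prod)
    also have "\<dots> = poly g k / (\<Prod>l\<in>T-{k}. k - l) * (\<Prod>l\<in>T-{k}. k - l)"
      using assms(1) that by (subst sum.remove[of _ k]) (auto intro!: sum.neutral prod_zero)
    also have "\<dots> = poly g k" using assms(1) by simp
    finally show ?thesis .
  qed
  ultimately have "R = g"
    using assms by (intro poly_eqI_degree[of T]) auto
  hence "coeff R (card T - 1) = 0" using assms(2) by (simp add: coeff_eq_0)
  moreover have "coeff R (card T - 1) = (\<Sum>s\<in>T. poly g s / (\<Prod>l\<in>T-{s}. s - l))"
    unfolding R_def coeff_sum coeff_smult by (intro sum.cong refl) (use coeff_P in auto)
  ultimately show ?thesis by simp
qed

lemma monomial_eval_on_line:
  fixes p h :: "'m::finite \<Rightarrow> 'a::field" and e :: "'m \<Rightarrow> nat"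
  defines "Q \<equiv> \<Prod>j\<in>UNIV. [:p j, h j:] ^ e j"
  shows "poly Q s = monomial_eval e (\<lambda>j. p j + s * h j)"
    and "degree Q \<le> sum e UNIV"
proof -
  show "poly Q s = monomial_eval e (\<lambda>j. p j + s * h j)"
    by (simp add: Q_def monomial_eval_def poly_prod poly_power algebra_simps)
  have "degree Q \<le> (\<Sum>j\<in>UNIV. degree ([:p j, h j:] ^ e j))"
    unfolding Q_def using degree_prod_sum_le[of UNIV "\<lambda>j. [:p j, h j:] ^ e j"] by (simp add: o_def)
  also have "\<dots> \<le> sum e UNIV"
  proof (rule sum_mono)
    fix j
    have "degree ([:p j, h j:] ^ e j) \<le> degree [:p j, h j:] * e j" by (rule degree_power_le)
    also have "\<dots> \<le> e j" by simp
    finally show "degree ([:p j, h j:] ^ e j) \<le> e j" .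
  qed
  finally show "degree Q \<le> sum e UNIV" .
qed

lemma RM_on_line:
  fixes w :: "('m::finite \<Rightarrow> 'a::field) \<Rightarrow> 'a" and p h :: "'m \<Rightarrow> 'a"
  assumes "w \<in> RM u"
  obtains g where "degree g \<le> u" "\<And>s. w (\<lambda>j. p j + s * h j) = poly g s"
proof -
  obtain c where c: "\<forall>x. w x = (\<Sum>e\<in>exponents u. c e * monomial_eval e x)"
    using assms mem_RM_iff by blast
  define Q where "Q e = (\<Prod>j\<in>UNIV. [:p j, h j:] ^ e j)" for e :: "'m \<Rightarrow> nat"
  define g where "g = (\<Sum>e\<in>exponents u. smult (c e) (Q e))"
  have "degree g \<le> u"
    unfolding g_def
  proof (intro degree_sum_le finite_exponents)
    fix e :: "'m \<Rightarrow> nat" assume "e \<in> exponents u"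
    thus "degree (smult (c e) (Q e)) \<le> u"
      using monomial_eval_on_line(2)[of p h e] degree_smult_le[of "c e" "Q e"]
      by (auto simp: Q_def exponents_def)
  qed
  moreover have "w (\<lambda>j. p j + s * h j) = poly g s" for s
    by (simp add: c g_def Q_def poly_sum monomial_eval_on_line(1))
  ultimately show ?thesis by (rule that)
qed

text \<open>The coefficients \<open>1 / (\<Prod>l\<in>T-{s}. s - l)\<close> are those of the top-degree term of
  Lagrange interpolation on \<open>T\<close>.\<close>

definition line_word :: "('m \<Rightarrow> 'a::field) \<Rightarrow> ('m \<Rightarrow> 'a) \<Rightarrow> 'a set \<Rightarrow> ('m \<Rightarrow> 'a) \<Rightarrow> 'a" where
  "line_word p h T x =
     (\<Sum>s\<in>T. if x = (\<lambda>j. p j + s * h j) then 1 / (\<Prod>l\<in>T-{s}. s - l) else 0)"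

lemma inj_line:
  fixes p h :: "'m \<Rightarrow> 'a::field"
  assumes "h \<noteq> (\<lambda>_. 0)"
  shows "inj (\<lambda>s. \<lambda>j. p j + s * h j)"
proof (rule injI)
  obtain j where "h j \<noteq> 0" using assms by auto
  fix s s' assume "(\<lambda>j. p j + s * h j) = (\<lambda>j. p j + s' * h j)"
  hence "p j + s * h j = p j + s' * h j" by metis
  thus "s = s'" using \<open>h j \<noteq> 0\<close> by simp
qed

lemma supp_line_word:
  fixes p h :: "'m \<Rightarrow> 'a::field"
  assumes "h \<noteq> (\<lambda>_. 0)" "finite T"
  shows "supp (line_word p h T) = (\<lambda>s. \<lambda>j. p j + s * h j) ` T"
proof -
  let ?L = "\<lambda>s. \<lambda>j. p j + s * h j"
  have "line_word p h T (?L s) = 1 / (\<Prod>l\<in>T-{s}. s - l)" if "s \<in> T" for s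
  proof -
    have "line_word p h T (?L s) = (\<Sum>s'\<in>T. if s' = s then 1 / (\<Prod>l\<in>T-{s'}. s' - l) else 0)"
      unfolding line_word_def using inj_line[OF assms(1)]
      by (intro sum.cong refl) (auto dest: injD)
    thus ?thesis using that assms(2) by simp
  qed
  moreover have "line_word p h T x = 0" if "x \<notin> ?L ` T" for x
    unfolding line_word_def using that by (intro sum.neutral) auto
  ultimately show ?thesis using assms(2) by (auto simp: supp_def)
qed

lemma line_word_in_dual_RM:
  fixes p h :: "'m::finite \<Rightarrow> 'a::{field,finite}"
  assumes "card T = u + 2"
  shows "line_word p h T \<in> dual_code (RM u)"
  unfolding dual_code_def
proof (intro CollectI ballI)
  fix w :: "('m \<Rightarrow> 'a) \<Rightarrow> 'a" assume "w \<in> RM u"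
  then obtain g where g: "degree g \<le> u" "\<And>s. w (\<lambda>j. p j + s * h j) = poly g s"
    using RM_on_line[where p = p and h = h] by metis
  have "(\<Sum>x\<in>UNIV. line_word p h T x * w x)
      = (\<Sum>s\<in>T. \<Sum>x\<in>UNIV. if x = (\<lambda>j. p j + s * h j) then w x / (\<Prod>l\<in>T-{s}. s - l) else 0)"
    unfolding line_word_def sum_distrib_right by (subst sum.swap) (auto intro!: sum.cong)
  also have "\<dots> = (\<Sum>s\<in>T. poly g s / (\<Prod>l\<in>T-{s}. s - l))" by (simp add: g(2))
  also have "\<dots> = 0" using assms g(1) by (intro sum_poly_div_prod_diff_eq_0) auto
  finally show "(\<Sum>x\<in>UNIV. line_word p h T x * w x) = 0" .
qed

lemma line_word_weight:
  fixes p h :: "'m \<Rightarrow> 'a::field"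
  assumes "h \<noteq> (\<lambda>_. 0)" "finite T"
  shows "hweight (line_word p h T) = card T"
  unfolding hweight_def supp_line_word[OF assms]
  by (rule card_image[OF inj_on_subset[OF inj_line[OF assms(1)] subset_UNIV]])

lemma min_weight_dual_RM:
  assumes "u + 2 \<le> card (UNIV :: 'a::{field,finite} set)"
  shows "min_weight (dual_code (RM u :: (('m::finite \<Rightarrow> 'a) \<Rightarrow> 'a) set)) = u + 2"
proof -
  obtain T :: "'a set" where "card T = u + 2"
    using obtain_subset_with_card_n[OF assms] by blast
  let ?v = "line_word (\<lambda>_. 0) (\<lambda>_. 1) T :: ('m \<Rightarrow> 'a) \<Rightarrow> 'a"
  have "?v \<in> dual_code (RM u)"
    using line_word_in_dual_RM \<open>card T = u + 2\<close> by blast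
  moreover have "hweight ?v = u + 2"
    using line_word_weight[of "\<lambda>_. 1" T] \<open>card T = u + 2\<close> by (simp add: fun_eq_iff)
  moreover from this have "?v \<noteq> (\<lambda>_. 0)" by (auto simp: hweight_def supp_def)
  ultimately show ?thesis
    unfolding min_weight_def using dual_RM_weight_ge
    by (intro Min_eqI) (fastforce intro: finite_subset[of _ "hweight ` UNIV"])+
qed

theorem mainTheorem2:
  fixes u :: nat
    and p h :: "'m::finite \<Rightarrow> 'a::{field,finite}"
    and t :: "nat \<Rightarrow> 'a"
  assumes "prime (card (UNIV :: 'a set))"
    and "u + 2 \<le> card (UNIV :: 'a set)"
    and "h \<noteq> (\<lambda>_. 0)"
    and "inj_on t {1..u+1}"
    and "\<forall>i\<in>{1..u+1}. t i \<noteq> 0"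
  shows "\<exists>v \<in> dual_code (RM u :: (('m \<Rightarrow> 'a) \<Rightarrow> 'a) set).
           hweight v = min_weight (dual_code (RM u :: (('m \<Rightarrow> 'a) \<Rightarrow> 'a) set)) \<and>
           supp v = insert p ((\<lambda>i. (\<lambda>j. p j + t i * h j)) ` {1..u+1})"
proof -
  define T where "T = insert 0 (t ` {1..u+1})"
  have "0 \<notin> t ` {1..u+1}" using assms(5) by auto
  hence "card T = u + 2"
    using card_image[OF assms(4)] by (simp add: T_def)
  moreover have "supp (line_word p h T) = insert p ((\<lambda>i. (\<lambda>j. p j + t i * h j)) ` {1..u+1})"
    using assms(3) by (simp add: supp_line_word T_def image_image)
  ultimately show ?thesis
    using line_word_in_dual_RM line_word_weight[OF assms(3)] min_weight_dual_RM[OF assms(2), where 'm = 'm]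
    by (intro bexI[of _ "line_word p h T"]) (auto simp: T_def)
qed

end
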